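(* Let $\phi$ be a Drinfeld $A$-module of any rank over a finite field $k$ of characteristic $p$. Then $\#\operatorname{Aut}(\phi)\equiv-1\pmod p$.
   Context: $C$ is a smooth, geometrically connected, proper curve over $\mathbb F_q$ ($q$ a power of the prime $p$), $\infty\in C$ a closed point with valuation $v_\infty$, $A=\mathcal O_C(C\setminus\{\infty\})$. Over a field $k\supseteq\mathbb F_q$, a Drinfeld $A$-module of rank $r$ is a ring homomorphism $\phi\colon A\to k\{\tau\}$ into the twisted polynomial ring ($\tau c=c^q\tau$, identified with $\mathbb F_q$-linear endomorphisms of $\mathbb G_a$) such that $\phi(a)$ has $\tau$-degree exactly $-r\deg(\infty)v_\infty(a)$. $\operatorname{Aut}(\phi)$ is the group of units of $k\{\tau\}$ commuting with all $\phi(a)$. *)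

theory Defs
  imports "HOL-Computational_Algebra.Polynomial" "HOL-Number_Theory.Cong"
begin

text \<open>The twisted polynomial ring k{tau} with tau c = c^q tau. An element
  sum_i f_i tau^i is represented by the ordinary polynomial sum_i f_i X^i;
  only the multiplication is twisted.\<close>

definition tw_mult :: "nat \<Rightarrow> 'k::comm_ring_1 poly \<Rightarrow> 'k poly \<Rightarrow> 'k poly" where
  "tw_mult q f g =
     (\<Sum>i\<le>degree f. smult (coeff f i) (monom 1 i * map_poly (\<lambda>c. c ^ (q ^ i)) g))"

definition tw_unit :: "nat \<Rightarrow> 'k::comm_ring_1 poly \<Rightarrow> bool" where
  "tw_unit q u \<longleftrightarrow> (\<exists>w. tw_mult q u w = 1 \<and> tw_mult q w u = 1)"

text \<open>Here v is v_infinity and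
  dinf = deg(infinity).\<close>
definition drinfeld_module ::
  "nat \<Rightarrow> ('a::comm_ring_1 \<Rightarrow> int) \<Rightarrow> nat \<Rightarrow> nat \<Rightarrow> ('a \<Rightarrow> 'k::comm_ring_1 poly) \<Rightarrow> bool" where
  "drinfeld_module q v dinf r \<phi> \<longleftrightarrow>
     \<phi> 1 = 1 \<and>
     (\<forall>a b. \<phi> (a + b) = \<phi> a + \<phi> b) \<and>
     (\<forall>a b. \<phi> (a * b) = tw_mult q (\<phi> a) (\<phi> b)) \<and>
     (\<forall>a. a \<noteq> 0 \<longrightarrow> \<phi> a \<noteq> 0 \<and>
           int (degree (\<phi> a)) = - int r * int dinf * v a)"

definition drinfeld_aut :: "nat \<Rightarrow> ('a \<Rightarrow> 'k::comm_ring_1 poly) \<Rightarrow> 'k poly set" where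
  "drinfeld_aut q \<phi> = {u. tw_unit q u \<and> (\<forall>a. tw_mult q u (\<phi> a) = tw_mult q (\<phi> a) u)}"

end

theory Submission
  imports Defs "HOL-Computational_Algebra.Primes"
begin

text \<open>Over a field the tau-degree is additive on k{tau}, so its units are the nonzero
  constants, and Aut(phi) consists of the nonzero c in the set K of constants commuting with
  every phi(a), i.e. with c * f_i = f_i * c^(q^i) for all coefficients f_i. Since q is a power
  of p, c \<mapsto> c^(q^i) is additive, so K is closed under addition and contains 1. Hence K
  is a disjoint union of translates of the prime field, so p divides #K, and #Aut(phi) = #K - 1.\<close>

lemma tw_mult_0_left [simp]: "tw_mult q 0 g = 0"
  by (simp add: tw_mult_def)

lemma tw_mult_0_right [simp]: "tw_mult q f 0 = 0"
  by (simp add: tw_mult_def)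

lemma tw_mult_const_left: "tw_mult q [:c:] g = smult c g"
  by (simp add: tw_mult_def monom_0 map_poly_idI)

lemma coeff_tw_mult:
  assumes "q > 0"
  shows "coeff (tw_mult q f g) k =
    (\<Sum>i\<le>degree f. coeff f i * (if i \<le> k then coeff g (k - i) ^ q ^ i else 0))"
  unfolding tw_mult_def coeff_sum
  using assms by (intro sum.cong refl) (simp add: coeff_monom_mult coeff_map_poly power_0_left)

lemma coeff_tw_mult_const_right:
  assumes "q > 0"
  shows "coeff (tw_mult q f [:c:]) k = coeff f k * c ^ q ^ k"
proof -
  have "coeff (tw_mult q f [:c:]) k =
      (\<Sum>i\<le>degree f. if i = k then coeff f k * c ^ q ^ k else 0)"
    unfolding coeff_tw_mult[OF assms]
    using assms by (intro sum.cong refl) (auto simp: coeff_pCons power_0_left split: nat.splits)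
  also have "\<dots> = coeff f k * c ^ q ^ k"
    by (auto simp: coeff_eq_0)
  finally show ?thesis .
qed

lemma coeff_tw_mult_above_degree:
  assumes "q > 0" and "degree f + degree g < k"
  shows "coeff (tw_mult q f g) k = 0"
  unfolding coeff_tw_mult[OF assms(1)]
  using assms by (intro sum.neutral) (auto simp: coeff_eq_0 power_0_left)

lemma coeff_tw_mult_degree_sum:
  assumes "q > 0"
  shows "coeff (tw_mult q f g) (degree f + degree g) = lead_coeff f * lead_coeff g ^ q ^ degree f"
proof -
  have "coeff (tw_mult q f g) (degree f + degree g) =
      (\<Sum>i\<le>degree f. if i = degree f then lead_coeff f * lead_coeff g ^ q ^ degree f else 0)"
    unfolding coeff_tw_mult[OF assms]
    using assms by (intro sum.cong refl) (auto simp: coeff_eq_0 power_0_left)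
  then show ?thesis by simp
qed

lemma degree_tw_mult:
  fixes f g :: "'k::idom poly"
  assumes "q > 0" and "f \<noteq> 0" and "g \<noteq> 0"
  shows "degree (tw_mult q f g) = degree f + degree g"
  using assms
  by (intro antisym degree_le le_degree)
     (simp_all add: coeff_tw_mult_above_degree coeff_tw_mult_degree_sum)

lemma tw_unit_iff_const:
  fixes u :: "'k::field poly"
  assumes "q > 0"
  shows "tw_unit q u \<longleftrightarrow> (\<exists>c. c \<noteq> 0 \<and> u = [:c:])"
proof
  assume "tw_unit q u"
  then obtain w where w: "tw_mult q u w = 1" unfolding tw_unit_def by blast
  then have "u \<noteq> 0" and "w \<noteq> 0" by auto
  then have "degree u + degree w = 0"
    using degree_tw_mult[OF assms] w by (metis degree_1)
  then have "u = [:coeff u 0:]" by (simp add: degree_0_id)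
  then show "\<exists>c. c \<noteq> 0 \<and> u = [:c:]" using \<open>u \<noteq> 0\<close> by (metis pCons_0_0)
next
  assume "\<exists>c. c \<noteq> 0 \<and> u = [:c:]"
  then obtain c where "c \<noteq> 0" "u = [:c:]" by blast
  then show "tw_unit q u"
    unfolding tw_unit_def
    by (intro exI[of _ "[:inverse c:]"]) (simp add: tw_mult_const_left one_pCons)
qed

lemma tw_mult_const_commute_iff:
  assumes "q > 0"
  shows "tw_mult q [:c:] f = tw_mult q f [:c:] \<longleftrightarrow> (\<forall>i. c * coeff f i = coeff f i * c ^ q ^ i)"
  by (simp add: poly_eq_iff tw_mult_const_left coeff_tw_mult_const_right[OF assms])

definition centralizing_consts :: "nat \<Rightarrow> ('a \<Rightarrow> 'k::comm_ring_1 poly) \<Rightarrow> 'k set" where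
  "centralizing_consts q \<phi> = {c. \<forall>a. tw_mult q [:c:] (\<phi> a) = tw_mult q (\<phi> a) [:c:]}"

lemma mem_centralizing_consts_iff:
  assumes "q > 0"
  shows "c \<in> centralizing_consts q \<phi> \<longleftrightarrow> (\<forall>a i. c * coeff (\<phi> a) i = coeff (\<phi> a) i * c ^ q ^ i)"
  by (simp add: centralizing_consts_def tw_mult_const_commute_iff[OF assms])

lemma zero_in_centralizing_consts: "0 \<in> centralizing_consts q \<phi>"
  by (simp add: centralizing_consts_def)

lemma one_in_centralizing_consts: "q > 0 \<Longrightarrow> 1 \<in> centralizing_consts q \<phi>"
  by (simp add: mem_centralizing_consts_iff)

lemma add_in_centralizing_consts:
  fixes \<phi> :: "'a \<Rightarrow> 'k::comm_ring_1 poly"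
  assumes "prime CHAR('k)" and "q = CHAR('k) ^ n"
    and "x \<in> centralizing_consts q \<phi>" and "y \<in> centralizing_consts q \<phi>"
  shows "x + y \<in> centralizing_consts q \<phi>"
proof -
  have "q > 0" using assms(1,2) prime_gt_0_nat by simp
  have frobenius: "(x + y) ^ q ^ i = x ^ q ^ i + y ^ q ^ i" for i
    by (rule freshmans_dream'[where n = "n * i"]) (simp_all add: assms(1,2) power_mult)
  show ?thesis
    using assms(3,4) by (simp add: mem_centralizing_consts_iff[OF \<open>q > 0\<close>] frobenius algebra_simps)
qed

lemma drinfeld_aut_eq_centralizing_consts:
  fixes \<phi> :: "'a \<Rightarrow> 'k::field poly"
  assumes "q > 0"
  shows "drinfeld_aut q \<phi> = (\<lambda>c. [:c:]) ` (centralizing_consts q \<phi> - {0})"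
  unfolding drinfeld_aut_def centralizing_consts_def tw_unit_iff_const[OF assms] by auto

lemma card_range_of_nat:
  assumes "CHAR('k::semiring_1_cancel) > 0"
  shows "card (range (of_nat :: nat \<Rightarrow> 'k)) = CHAR('k)"
proof -
  have "of_nat j = (of_nat (j mod CHAR('k)) :: 'k)" for j
    by (simp add: of_nat_eq_iff_cong_CHAR cong_def)
  then have "range (of_nat :: nat \<Rightarrow> 'k) = of_nat ` {..<CHAR('k)}"
    using assms by auto (metis imageI lessThan_iff mod_less_divisor)
  moreover have "inj_on (of_nat :: nat \<Rightarrow> 'k) {..<CHAR('k)}"
    by (auto simp: inj_on_def of_nat_eq_iff_cong_CHAR cong_def)
  ultimately show ?thesis by (simp add: card_image)
qed

lemma CHAR_dvd_card_if_closed_under_plus_one: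
  fixes K :: "'k::ring_1 set"
  assumes "finite K" and "CHAR('k) > 0" and closed: "\<And>x. x \<in> K \<Longrightarrow> x + 1 \<in> K"
  shows "CHAR('k) dvd card K"
proof -
  have plus_of_nat: "x + of_nat j \<in> K" if "x \<in> K" for x j
  proof (induction j)
    case (Suc j)
    then have "(x + of_nat j) + 1 \<in> K" by (rule closed)
    then show ?case by (simp add: ac_simps)
  qed (use that in simp)
  define r where "r = {(x, y). x \<in> K \<and> (\<exists>j. y = x + (of_nat j :: 'k))}"
  have "equiv K r"
  proof (rule equivI)
    show "r \<subseteq> K \<times> K" unfolding r_def using plus_of_nat by blast
    show "refl_on K r" unfolding r_def refl_on_def by (auto intro!: exI[where x = 0])
    show "sym r" unfolding r_def sym_def
    proof clarify
      fix x j assume "x \<in> K"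
      have "j + j * (CHAR('k) - 1) = j * CHAR('k)"
        using assms(2) by (simp add: algebra_simps)
      then have "of_nat j + of_nat (j * (CHAR('k) - 1)) = (0 :: 'k)"
        by (metis of_nat_add of_nat_mult of_nat_CHAR mult_zero_right)
      then have "x = (x + of_nat j) + of_nat (j * (CHAR('k) - 1))"
        by (simp add: add.assoc)
      then show "x + of_nat j \<in> K \<and> (\<exists>i. x = x + of_nat j + of_nat i)"
        using plus_of_nat \<open>x \<in> K\<close> by blast
    qed
    show "trans r" unfolding r_def trans_def by (auto simp: add.assoc simp flip: of_nat_add)
  qed
  moreover have "CHAR('k) dvd card X" if "X \<in> K // r" for X
  proof -
    from that obtain x where "x \<in> K" and X: "X = r `` {x}" by (rule quotientE)
    then have "X = (+) x ` range of_nat" unfolding r_def by auto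
    then show ?thesis
      using card_range_of_nat[OF assms(2)] by (simp add: card_image inj_on_def)
  qed
  ultimately show ?thesis using assms(1) by (rule equiv_imp_dvd_card[rotated])
qed

theorem lemma2p5:
  fixes \<phi> :: "'a::comm_ring_1 \<Rightarrow> 'k::{finite,field} poly"
    and v :: "'a \<Rightarrow> int" and p q n m dinf r :: nat
  assumes "prime p" and "CHAR('k) = p"
    and "n \<ge> 1" and "q = p ^ n" and "m \<ge> 1" and "card (UNIV :: 'k set) = q ^ m"
    and "dinf \<ge> 1" and "r \<ge> 1"
    and "drinfeld_module q v dinf r \<phi>"
  shows "[int (card (drinfeld_aut q \<phi>)) = - 1] (mod int p)"
proof -
  define K where "K = centralizing_consts q \<phi>"
  have "q > 0" using assms(1,4) prime_gt_0_nat by simp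
  have "0 \<in> K" unfolding K_def by (rule zero_in_centralizing_consts)
  have card_aut: "card (drinfeld_aut q \<phi>) = card K - 1"
    unfolding drinfeld_aut_eq_centralizing_consts[OF \<open>q > 0\<close>] K_def[symmetric]
    using \<open>0 \<in> K\<close> by (simp add: card_image inj_on_def)
  have "p dvd card K"
  proof (rule CHAR_dvd_card_if_closed_under_plus_one[where 'k = 'k, unfolded assms(2)])
    show "x + 1 \<in> K" if "x \<in> K" for x
      using add_in_centralizing_consts[OF _ _ _ one_in_centralizing_consts[OF \<open>q > 0\<close>]] that
        assms(1,2,4) unfolding K_def by blast
  qed (use assms(1) prime_gt_0_nat in auto)
  moreover have "card K \<ge> 1"
    using \<open>0 \<in> K\<close> by (auto simp: Suc_le_eq card_gt_0_iff)
  ultimately show ?thesis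
    by (simp add: card_aut cong_iff_dvd_diff)
qed

end
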